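(* Let $M$ be a $3$-connected matroid, let $\mathcal{T}$ be a tangle of $M$, and let $X,X'$ be long lines of the tangle matroid $M(\mathcal{T})$ such that $\rank_{\mathcal{T}}(X\cup X')=4$. Let $e\in X$ and $M'\in\{M\setminus e, M/e\}$ be such that $M'$ is $3$-connected, and let $\mathcal{T}'$ be the tangle of $M'$ inherited from $\mathcal{T}$. Then $X'$ is closed in the tangle matroid $M'(\mathcal{T}')$.
   Context: $\lambda_M(X) = \rank_M(X) + \rank_M(E(M)\setminus X) - \rank(M)$. A tangle of order $\theta$ of $M$ is a collection $\mathcal{T}$ of subsets of $E(M)$ such that: (i) $\lambda_M(X)<\theta$ for all $X\in\mathcal{T}$; (ii) for every $X\subseteq E(M)$ with $\lambda_M(X)<\theta$, either $X\in\mathcal{T}$ or $E(M)\setminus X\in\mathcal{T}$; (iii) if $X,Y,Z\in\mathcal{T}$ then $X\cup Y\cup Z\neq E(M)$; (iv) $E(M)\setminus\{e\}\notin\mathcal{T}$ for every $e\in E(M)$. The tangle matroid $M(\mathcal{T})$ has rank function $\rank_{\mathcal{T}}(X) = \min\{\lambda_M(Y): X\subseteq Y\in\mathcal{T}\}$ if some member of $\mathcal{T}$ contains $X$, and $\theta$ otherwise. A long line is a closed set of rank $2$ with at least $3$ elements. For a minor $N$ of $M$ with $S=E(M)\setminus E(N)$, the tangle of $N$ inherited from $\mathcal{T}$ is $\{X\setminus S: X\in\mathcal{T},\ \lambda_N(X\setminus S)<\theta-|S|\}$, a tangle of $N$ of order $\theta-|S|$. *)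

theory Defs
  imports Main
begin

type_synonym 'a matroid = "'a set \<times> ('a set \<Rightarrow> nat)"

definition ground :: "'a matroid \<Rightarrow> 'a set" where
  "ground M = fst M"

definition rk :: "'a matroid \<Rightarrow> 'a set \<Rightarrow> nat" where
  "rk M = snd M"

definition matroid :: "'a matroid \<Rightarrow> bool" where
  "matroid M \<longleftrightarrow> finite (ground M)
     \<and> (\<forall>X. X \<subseteq> ground M \<longrightarrow> rk M X \<le> card X)
     \<and> (\<forall>X Y. X \<subseteq> Y \<and> Y \<subseteq> ground M \<longrightarrow> rk M X \<le> rk M Y)
     \<and> (\<forall>X Y. X \<subseteq> ground M \<and> Y \<subseteq> ground M \<longrightarrow>
          rk M (X \<union> Y) + rk M (X \<inter> Y) \<le> rk M X + rk M Y)"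

definition deletion :: "'a matroid \<Rightarrow> 'a \<Rightarrow> 'a matroid" where
  "deletion M e = (ground M - {e}, rk M)"

definition contraction :: "'a matroid \<Rightarrow> 'a \<Rightarrow> 'a matroid" where
  "contraction M e = (ground M - {e}, \<lambda>X. rk M (X \<union> {e}) - rk M {e})"

definition conn :: "'a matroid \<Rightarrow> 'a set \<Rightarrow> nat" where
  "conn M X = rk M X + rk M (ground M - X) - rk M (ground M)"

definition k_separation :: "'a matroid \<Rightarrow> nat \<Rightarrow> 'a set \<Rightarrow> bool" where
  "k_separation M k X \<longleftrightarrow> X \<subseteq> ground M \<and> card X \<ge> k \<and> card (ground M - X) \<ge> k
     \<and> conn M X < k"

definition n_connected :: "'a matroid \<Rightarrow> nat \<Rightarrow> bool" where
  "n_connected M n \<longleftrightarrow> (\<forall>k X. 1 \<le> k \<and> k < n \<longrightarrow> \<not> k_separation M k X)"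

definition tangle :: "'a matroid \<Rightarrow> nat \<Rightarrow> 'a set set \<Rightarrow> bool" where
  "tangle M \<theta> \<T> \<longleftrightarrow>
     (\<forall>X\<in>\<T>. X \<subseteq> ground M)
     \<and> (\<forall>X\<in>\<T>. conn M X < \<theta>)
     \<and> (\<forall>X. X \<subseteq> ground M \<and> conn M X < \<theta> \<longrightarrow> X \<in> \<T> \<or> ground M - X \<in> \<T>)
     \<and> (\<forall>X\<in>\<T>. \<forall>Y\<in>\<T>. \<forall>Z\<in>\<T>. X \<union> Y \<union> Z \<noteq> ground M)
     \<and> (\<forall>e\<in>ground M. ground M - {e} \<notin> \<T>)"

definition tangle_rank :: "'a matroid \<Rightarrow> nat \<Rightarrow> 'a set set \<Rightarrow> 'a set \<Rightarrow> nat" where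
  "tangle_rank M \<theta> \<T> X =
     (if \<exists>Y\<in>\<T>. X \<subseteq> Y then Min {conn M Y | Y. Y \<in> \<T> \<and> X \<subseteq> Y} else \<theta>)"

definition tangle_matroid :: "'a matroid \<Rightarrow> nat \<Rightarrow> 'a set set \<Rightarrow> 'a matroid" where
  "tangle_matroid M \<theta> \<T> = (ground M, tangle_rank M \<theta> \<T>)"

definition inherited_tangle ::
    "'a matroid \<Rightarrow> 'a matroid \<Rightarrow> nat \<Rightarrow> 'a set set \<Rightarrow> 'a set set" where
  "inherited_tangle M N \<theta> \<T> =
     (let S = ground M - ground N in
      {X - S | X. X \<in> \<T> \<and> conn N (X - S) < \<theta> - card S})"

definition closed_set :: "'a matroid \<Rightarrow> 'a set \<Rightarrow> bool" where
  "closed_set M X \<longleftrightarrow> X \<subseteq> ground M \<and> (\<forall>e \<in> ground M - X. rk M (insert e X) \<noteq> rk M X)"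

definition long_line :: "'a matroid \<Rightarrow> 'a set \<Rightarrow> bool" where
  "long_line M X \<longleftrightarrow> closed_set M X \<and> rk M X = 2 \<and> card X \<ge> 3"

end

theory Submission imports Defs begin

text \<open>
  Choose \<open>W, W' \<in> \<T>\<close> with \<open>\<lambda>(W) = \<lambda>(W') = 2\<close> containing \<open>X\<close> and \<open>X'\<close>. Two members of \<open>\<T>\<close> of
  connectivity at most 2 that meet have, by submodularity and 3-connectivity, a union in \<open>\<T>\<close> of
  connectivity at most 3; as \<open>r\<^sub>\<T>(X \<union> X') = 4\<close>, \<open>W\<close> and \<open>W'\<close> are disjoint, so \<open>e \<notin> X'\<close> and \<open>W' - e\<close>
  shows that \<open>X'\<close> still has rank at most 2 in \<open>M'(\<T>')\<close>. If \<open>X' + f\<close> had rank 2 as well, it would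
  lie in some \<open>Z = Y - e\<close> with \<open>Y \<in> \<T>\<close> and \<open>\<lambda>\<^sub>M\<^sub>'(Z) \<le> 2\<close>. Then \<open>Z\<close> and \<open>Z + e\<close> lie in \<open>\<T>\<close>,
  \<open>\<lambda>\<^sub>M(Z) \<ge> r\<^sub>\<T>(X' + f) \<ge> 3\<close>, and \<open>Z\<close> avoids \<open>W\<close> by the same union argument applied to \<open>Z + e\<close> and \<open>W\<close>,
  which share at least two elements. Finally, since \<open>\<lambda>\<^sub>M\<^sub>'(W - e) \<ge> 2 = \<lambda>\<^sub>M(W)\<close> by 3-connectivity of \<open>M'\<close>,
  removing \<open>e\<close> does not lower the connectivity of any set avoiding \<open>W\<close>; so \<open>\<lambda>\<^sub>M(Z) \<le> \<lambda>\<^sub>M\<^sub>'(Z) \<le> 2\<close>.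
\<close>

section \<open>Rank and connectivity\<close>

lemma matroidD:
  assumes "matroid M"
  shows "finite (ground M)"
    and "X \<subseteq> ground M \<Longrightarrow> rk M X \<le> card X"
    and "X \<subseteq> Y \<Longrightarrow> Y \<subseteq> ground M \<Longrightarrow> rk M X \<le> rk M Y"
    and "X \<subseteq> ground M \<Longrightarrow> Y \<subseteq> ground M \<Longrightarrow> rk M (X \<union> Y) + rk M (X \<inter> Y) \<le> rk M X + rk M Y"
  using assms unfolding matroid_def by blast+

lemma rk_empty: "matroid M \<Longrightarrow> rk M {} = 0"
  using matroidD(2)[of M "{}"] by simp

lemma rk_singleton_le: "matroid M \<Longrightarrow> e \<in> ground M \<Longrightarrow> rk M {e} \<le> 1"
  using matroidD(2)[of M "{e}"] by simp

lemma rk_insert_le: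
  assumes "matroid M" "A \<subseteq> ground M" "e \<in> ground M"
  shows "rk M (insert e A) \<le> rk M A + rk M {e}"
  using matroidD(4)[OF assms(1,2), of "{e}"] assms by auto

lemma int_conn:
  assumes "matroid M" "S \<subseteq> ground M"
  shows "int (conn M S) = int (rk M S) + int (rk M (ground M - S)) - int (rk M (ground M))"
proof -
  have "S \<union> (ground M - S) = ground M" "S \<inter> (ground M - S) = {}"
    using assms(2) by auto
  then have "rk M (ground M) \<le> rk M S + rk M (ground M - S)"
    using matroidD(4)[OF assms(1), of S "ground M - S"] assms rk_empty by fastforce
  then show ?thesis unfolding conn_def by simp
qed

lemma conn_le_rk:
  assumes "matroid M" "S \<subseteq> ground M"
  shows "conn M S \<le> rk M S"
  using int_conn[OF assms] matroidD(3)[OF assms(1), of "ground M - S" "ground M"] by simp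

lemma conn_Diff: "S \<subseteq> ground M \<Longrightarrow> conn M (ground M - S) = conn M S"
  by (simp add: conn_def double_diff)

lemma conn_submodular:
  assumes "matroid M" "A \<subseteq> ground M" "B \<subseteq> ground M"
  shows "conn M (A \<union> B) + conn M (A \<inter> B) \<le> conn M A + conn M B"
proof -
  let ?E = "ground M"
  have "?E - (A \<union> B) = (?E - A) \<inter> (?E - B)" "?E - (A \<inter> B) = (?E - A) \<union> (?E - B)"
    by auto
  moreover have "A \<union> B \<subseteq> ?E" "A \<inter> B \<subseteq> ?E" using assms(2,3) by auto
  ultimately have "int (conn M (A \<union> B)) + int (conn M (A \<inter> B))
      = int (rk M (A \<union> B)) + int (rk M (A \<inter> B))
        + int (rk M ((?E - A) \<union> (?E - B))) + int (rk M ((?E - A) \<inter> (?E - B))) - 2 * int (rk M ?E)"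
    using int_conn[OF assms(1), of "A \<union> B"] int_conn[OF assms(1), of "A \<inter> B"] by simp
  moreover have "rk M (A \<union> B) + rk M (A \<inter> B) \<le> rk M A + rk M B"
    using matroidD(4)[OF assms] .
  moreover have "rk M ((?E - A) \<union> (?E - B)) + rk M ((?E - A) \<inter> (?E - B)) \<le> rk M (?E - A) + rk M (?E - B)"
    using matroidD(4)[OF assms(1), of "?E - A" "?E - B"] by simp
  ultimately show ?thesis
    using int_conn[OF assms(1,2)] int_conn[OF assms(1,3)] by linarith
qed

lemma three_connected_conn_ge:
  assumes "n_connected M 3" "S \<subseteq> ground M" "k \<le> 2" "k \<le> card S" "k \<le> card (ground M - S)"
  shows "k \<le> conn M S"
proof (rule ccontr)
  assume "\<not> k \<le> conn M S"
  then have "k_separation M k S" "1 \<le> k"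
    using assms(2,4,5) unfolding k_separation_def by auto
  moreover have "k < 3" using assms(3) by simp
  ultimately show False using assms(1) unfolding n_connected_def by blast
qed

section \<open>Single-element deletions and contractions\<close>

lemma ground_deletion [simp]: "ground (deletion M e) = ground M - {e}"
  and rk_deletion [simp]: "rk (deletion M e) = rk M"
  and ground_contraction [simp]: "ground (contraction M e) = ground M - {e}"
  and rk_contraction [simp]: "rk (contraction M e) X = rk M (insert e X) - rk M {e}"
  by (simp_all add: deletion_def contraction_def ground_def rk_def)

lemma matroid_deletion:
  assumes "matroid M"
  shows "matroid (deletion M e)"
proof -
  have "\<And>X. X \<subseteq> ground M - {e} \<Longrightarrow> X \<subseteq> ground M" by blast
  then show ?thesis
    using matroidD[OF assms] unfolding matroid_def by simp
qed

lemma matroid_contraction: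
  assumes "matroid M" "e \<in> ground M"
  shows "matroid (contraction M e)"
proof -
  have ground: "insert e X \<subseteq> ground M" if "X \<subseteq> ground M - {e}" for X
    using that assms(2) by blast
  have e_le: "rk M {e} \<le> rk M (insert e X)" if "X \<subseteq> ground M - {e}" for X
    by (rule matroidD(3)[OF assms(1) _ ground[OF that]]) simp
  have "rk M (insert e X) - rk M {e} \<le> card X" if "X \<subseteq> ground M - {e}" for X
    using rk_insert_le[OF assms(1) _ assms(2), of X] matroidD(2)[OF assms(1), of X] that by force
  moreover have "rk M (insert e X) - rk M {e} \<le> rk M (insert e Y) - rk M {e}"
    if "X \<subseteq> Y" "Y \<subseteq> ground M - {e}" for X Y
    using matroidD(3)[OF assms(1) _ ground[OF that(2)], of "insert e X"] that(1) by force
  moreover have "rk M (insert e (X \<union> Y)) - rk M {e} + (rk M (insert e (X \<inter> Y)) - rk M {e})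
      \<le> rk M (insert e X) - rk M {e} + (rk M (insert e Y) - rk M {e})"
    if "X \<subseteq> ground M - {e}" "Y \<subseteq> ground M - {e}" for X Y
  proof -
    have "rk M (insert e X \<union> insert e Y) + rk M (insert e X \<inter> insert e Y) \<le> rk M (insert e X) + rk M (insert e Y)"
      using matroidD(4)[OF assms(1) ground[OF that(1)] ground[OF that(2)]] .
    moreover have "X \<union> Y \<subseteq> ground M - {e}" "X \<inter> Y \<subseteq> ground M - {e}" using that by auto
    ultimately show ?thesis
      using e_le[of "X \<union> Y"] e_le[of "X \<inter> Y"] by simp
  qed
  ultimately show ?thesis
    using matroidD(1)[OF assms(1)] unfolding matroid_def by simp
qed

lemma int_conn_deletion:
  assumes "matroid M" "Z \<subseteq> ground M - {e}"
  shows "int (conn (deletion M e) Z) = int (rk M Z) + int (rk M (ground M - {e} - Z)) - int (rk M (ground M - {e}))"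
  using int_conn[OF matroid_deletion[OF assms(1)], of Z] assms(2) by simp

lemma int_conn_contraction:
  assumes "matroid M" "e \<in> ground M" "Z \<subseteq> ground M - {e}"
  shows "int (conn (contraction M e) Z)
    = int (rk M (insert e Z)) + int (rk M (ground M - Z)) - int (rk M (ground M)) - int (rk M {e})"
proof -
  have e_le: "rk M {e} \<le> rk M (insert e T)" if "T \<subseteq> ground M" for T
    using matroidD(3)[OF assms(1)] that assms(2) by auto
  have "insert e (ground M - {e} - Z) = ground M - Z" "insert e (ground M - {e}) = ground M"
    using assms(2,3) by auto
  moreover have "rk M {e} \<le> rk M (insert e Z)" "rk M {e} \<le> rk M (ground M - Z)" "rk M {e} \<le> rk M (ground M)"
    using e_le[of Z] e_le[of "ground M - {e} - Z"] e_le[of "ground M - {e}"] calculation assms(3) by auto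
  ultimately show ?thesis
    using int_conn[OF matroid_contraction[OF assms(1,2)], of Z] assms(3) by (simp add: of_nat_diff)
qed

lemma int_conn_insert:
  assumes "matroid M" "e \<in> ground M" "Z \<subseteq> ground M - {e}"
  shows "int (conn M (insert e Z)) = int (rk M (insert e Z)) + int (rk M (ground M - {e} - Z)) - int (rk M (ground M))"
proof -
  have "ground M - insert e Z = ground M - {e} - Z" by auto
  then show ?thesis using int_conn[OF assms(1), of "insert e Z"] assms by auto
qed

lemma conn_minor_bounds:
  assumes "matroid M" "e \<in> ground M" "M' = deletion M e \<or> M' = contraction M e"
    and "Z \<subseteq> ground M - {e}"
  shows "conn M' Z \<le> conn M Z" and "conn M' Z \<le> conn M (insert e Z)"
    and "conn M Z \<le> conn M' Z + 1" and "conn M (insert e Z) \<le> conn M' Z + 1"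
proof -
  let ?E = "ground M" and ?r = "rk M"
  have Z: "Z \<subseteq> ?E" "insert e Z \<subseteq> ?E" using assms(2,4) by auto
  have "(?E - Z) \<union> (?E - {e}) = ?E" "(?E - Z) \<inter> (?E - {e}) = ?E - {e} - Z"
    using Z assms(2,4) by auto
  then have F1: "?r (?E - {e} - Z) + ?r ?E \<le> ?r (?E - Z) + ?r (?E - {e})"
    using matroidD(4)[OF assms(1), of "?E - Z" "?E - {e}"] by auto
  have "insert e Z \<union> (?E - {e}) = ?E" "insert e Z \<inter> (?E - {e}) = Z"
    using Z assms(2,4) by auto
  then have F2: "?r Z + ?r ?E \<le> ?r (insert e Z) + ?r (?E - {e})"
    using matroidD(4)[OF assms(1) Z(2), of "?E - {e}"] by auto
  have "insert e (?E - {e} - Z) = ?E - Z" using Z assms(2,4) by auto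
  then have F3: "?r (?E - Z) \<le> ?r (?E - {e} - Z) + ?r {e}"
    using rk_insert_le[OF assms(1) _ assms(2), of "?E - {e} - Z"] by auto
  have F4: "?r (insert e Z) \<le> ?r Z + ?r {e}" using rk_insert_le[OF assms(1) Z(1) assms(2)] .
  have F5: "?r {e} \<le> 1" using rk_singleton_le[OF assms(1,2)] .
  have F6: "?r (?E - {e}) \<le> ?r ?E" "?r Z \<le> ?r (insert e Z)" "?r (?E - {e} - Z) \<le> ?r (?E - Z)"
    by (rule matroidD(3)[OF assms(1)]; use Z in auto)+
  note conn_eqs = int_conn[OF assms(1) Z(1)] int_conn_insert[OF assms(1,2,4)]
  have "int (conn M' Z) \<le> int (conn M Z) \<and> int (conn M' Z) \<le> int (conn M (insert e Z))
     \<and> int (conn M Z) \<le> int (conn M' Z) + 1 \<and> int (conn M (insert e Z)) \<le> int (conn M' Z) + 1"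
    using assms(3)
  proof
    assume "M' = deletion M e"
    then show ?thesis
      using int_conn_deletion[OF assms(1,4)] conn_eqs F1 F2 F3 F4 F5 F6 by simp
  next
    assume "M' = contraction M e"
    then show ?thesis
      using int_conn_contraction[OF assms(1,2,4)] conn_eqs F1 F2 F3 F4 F5 F6 by simp
  qed
  then show "conn M' Z \<le> conn M Z" "conn M' Z \<le> conn M (insert e Z)"
    "conn M Z \<le> conn M' Z + 1" "conn M (insert e Z) \<le> conn M' Z + 1"
    by linarith+
qed

lemma conn_minor_Diff_le:
  assumes "matroid M" "e \<in> ground M" "M' = deletion M e \<or> M' = contraction M e" "S \<subseteq> ground M"
  shows "conn M' (S - {e}) \<le> conn M S"
proof (cases "e \<in> S")
  case True
  then have "insert e (S - {e}) = S" by auto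
  then show ?thesis using conn_minor_bounds(2)[OF assms(1-3), of "S - {e}"] assms(4) by auto
next
  case False
  then show ?thesis using conn_minor_bounds(1)[OF assms(1-3), of S] assms(4) by auto
qed

text \<open>The excess \<open>\<lambda>\<^sub>M(B + e) - \<lambda>\<^sub>M\<^sub>'(B)\<close> is antitone in \<open>B\<close>: it equals
  \<open>(r(B + e) - r(B)) - (r(E) - r(E - e))\<close> for a deletion and \<open>r(e) - (r(E - B) - r(E - e - B))\<close>
  for a contraction.\<close>

lemma conn_insert_minus_minor_antimono:
  assumes "matroid M" "e \<in> ground M" "M' = deletion M e \<or> M' = contraction M e"
    and "C \<subseteq> B" "B \<subseteq> ground M - {e}"
  shows "int (conn M (insert e B)) - int (conn M' B) \<le> int (conn M (insert e C)) - int (conn M' C)"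
proof -
  let ?E = "ground M" and ?r = "rk M"
  have C: "C \<subseteq> ?E - {e}" using assms(4,5) by auto
  have "insert e C \<union> B = insert e B" "insert e C \<inter> B = C" "insert e C \<subseteq> ?E" "B \<subseteq> ?E"
    using assms(2,4,5) by auto
  then have S1: "?r (insert e B) + ?r C \<le> ?r (insert e C) + ?r B"
    using matroidD(4)[OF assms(1), of "insert e C" B] by auto
  have "(?E - B) \<union> (?E - {e} - C) = ?E - C" "(?E - B) \<inter> (?E - {e} - C) = ?E - {e} - B"
    using assms(2,4,5) by auto
  then have S2: "?r (?E - C) + ?r (?E - {e} - B) \<le> ?r (?E - B) + ?r (?E - {e} - C)"
    using matroidD(4)[OF assms(1), of "?E - B" "?E - {e} - C"] by auto
  note conn_eqs = int_conn_insert[OF assms(1,2) C] int_conn_insert[OF assms(1,2,5)]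
  show ?thesis
    using assms(3)
  proof
    assume "M' = deletion M e"
    then show ?thesis
      using int_conn_deletion[OF assms(1) C] int_conn_deletion[OF assms(1,5)] conn_eqs S1 S2
      by simp
  next
    assume "M' = contraction M e"
    then show ?thesis
      using int_conn_contraction[OF assms(1,2) C] int_conn_contraction[OF assms(1,2,5)] conn_eqs S1 S2
      by simp
  qed
qed

lemma conn_le_minor_conn_if_disjoint:
  assumes "matroid M" "M' = deletion M e \<or> M' = contraction M e" "n_connected M' 3"
    and "W \<subseteq> ground M" "e \<in> W" "conn M W \<le> 2" "3 \<le> card W" "2 \<le> card (ground M - W)"
    and "Z \<subseteq> ground M - {e}" "Z \<inter> W = {}"
  shows "conn M Z \<le> conn M' Z"
proof -
  let ?E = "ground M"
  have e: "e \<in> ?E" using assms(4,5) by auto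
  have ground': "ground M' = ?E - {e}" using assms(2) by auto
  have fin: "finite W" using matroidD(1)[OF assms(1)] assms(4) finite_subset by blast
  have "2 \<le> conn M' (W - {e})"
    by (rule three_connected_conn_ge[OF assms(3)])
      (use assms(4,5,7,8) fin ground' in \<open>auto simp: Diff_insert2[symmetric] insert_absorb\<close>)
  then have "int (conn M (insert e (W - {e}))) - int (conn M' (W - {e})) \<le> 0"
    using assms(5,6) by (simp add: insert_absorb)
  then have "int (conn M (insert e (?E - {e} - Z))) - int (conn M' (?E - {e} - Z)) \<le> 0"
    using conn_insert_minus_minor_antimono[OF assms(1) e assms(2), of "W - {e}" "?E - {e} - Z"]
      assms(4,10) by fastforce
  moreover have "insert e (?E - {e} - Z) = ?E - Z" using assms(9) e by auto
  ultimately show ?thesis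
    using conn_Diff[of Z M] conn_Diff[of Z M'] assms(9) ground' by (simp add: subset_Diff_insert)
qed

section \<open>Tangles\<close>

lemma tangleD:
  assumes "tangle M \<theta> \<T>"
  shows "Y \<in> \<T> \<Longrightarrow> Y \<subseteq> ground M"
    and "\<forall>Y\<in>\<T>. conn M Y < \<theta>"
    and "S \<subseteq> ground M \<Longrightarrow> conn M S < \<theta> \<Longrightarrow> S \<in> \<T> \<or> ground M - S \<in> \<T>"
    and "A \<in> \<T> \<Longrightarrow> B \<in> \<T> \<Longrightarrow> C \<in> \<T> \<Longrightarrow> A \<union> B \<union> C \<noteq> ground M"
    and "a \<in> ground M \<Longrightarrow> ground M - {a} \<notin> \<T>"
  using assms unfolding tangle_def by simp_all

lemma tangle_singleton_mem:
  assumes "matroid M" "tangle M \<theta> \<T>" "1 < \<theta>" "a \<in> ground M"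
  shows "{a} \<in> \<T>"
proof -
  have "conn M {a} \<le> 1"
    using conn_le_rk[OF assms(1), of "{a}"] rk_singleton_le[OF assms(1,4)] assms(4) by auto
  moreover have "{a} \<subseteq> ground M" using assms(4) by simp
  ultimately show ?thesis
    using tangleD(3)[OF assms(2), of "{a}"] tangleD(5)[OF assms(2,4)] assms(3) by simp
qed

lemma tangle_card_Diff_ge:
  assumes "matroid M" "tangle M \<theta> \<T>" "1 < \<theta>" "Y \<in> \<T>"
  shows "2 \<le> card (ground M - Y)"
proof (rule ccontr)
  have Y: "Y \<subseteq> ground M" using tangleD(1)[OF assms(2,4)] .
  assume "\<not> 2 \<le> card (ground M - Y)"
  then have "card (ground M - Y) = 0 \<or> card (ground M - Y) = 1" by linarith
  moreover have "finite (ground M - Y)" using matroidD(1)[OF assms(1)] by simp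
  ultimately consider "ground M - Y = {}" | a where "ground M - Y = {a}"
    using card_1_singletonE by auto
  then show False
  proof cases
    case 1
    then have "Y \<union> Y \<union> Y = ground M" using Y by blast
    then show False using tangleD(4)[OF assms(2,4,4,4)] by simp
  next
    case (2 a)
    then have "Y \<union> {a} \<union> {a} = ground M" "{a} \<in> \<T>"
      using Y tangle_singleton_mem[OF assms(1-3)] by auto
    then show False using tangleD(4)[OF assms(2,4)] by blast
  qed
qed

lemma tangle_subset_mem:
  assumes "tangle M \<theta> \<T>" "Y \<in> \<T>" "Z \<subseteq> Y" "conn M Z < \<theta>"
  shows "Z \<in> \<T>"
proof (rule ccontr)
  assume "Z \<notin> \<T>"
  have Y: "Y \<subseteq> ground M" using tangleD(1)[OF assms(1,2)] .
  with assms(3) have "Z \<subseteq> ground M" by blast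
  with \<open>Z \<notin> \<T>\<close> have "ground M - Z \<in> \<T>" using tangleD(3)[OF assms(1) _ assms(4)] by blast
  moreover have "Y \<union> (ground M - Z) \<union> (ground M - Z) = ground M" using Y assms(3) by blast
  ultimately show False using tangleD(4)[OF assms(1,2)] by blast
qed

lemma tangle_Un_mem:
  assumes "tangle M \<theta> \<T>" "A \<in> \<T>" "B \<in> \<T>" "conn M (A \<union> B) < \<theta>"
  shows "A \<union> B \<in> \<T>"
proof (rule ccontr)
  assume "A \<union> B \<notin> \<T>"
  have AB: "A \<union> B \<subseteq> ground M" using tangleD(1)[OF assms(1)] assms(2,3) by blast
  with \<open>A \<union> B \<notin> \<T>\<close> have "ground M - (A \<union> B) \<in> \<T>" using tangleD(3)[OF assms(1) _ assms(4)] by blast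
  moreover have "A \<union> B \<union> (ground M - (A \<union> B)) = ground M" using AB by blast
  ultimately show False using tangleD(4)[OF assms(1-3)] by blast
qed

lemma ground_tangle_matroid [simp]: "ground (tangle_matroid M \<theta> \<T>) = ground M"
  and rk_tangle_matroid [simp]: "rk (tangle_matroid M \<theta> \<T>) = tangle_rank M \<theta> \<T>"
  by (simp_all add: tangle_matroid_def ground_def rk_def)

lemma long_line_tangle_matroidD:
  assumes "long_line (tangle_matroid M \<theta> \<T>) X"
  shows "X \<subseteq> ground M" "tangle_rank M \<theta> \<T> X = 2" "3 \<le> card X"
    and "f \<in> ground M - X \<Longrightarrow> tangle_rank M \<theta> \<T> (insert f X) \<noteq> 2"
  using assms unfolding long_line_def closed_set_def by auto

lemma finite_conn_image:
  assumes "\<forall>Y\<in>\<T>. conn M Y < \<theta>"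
  shows "finite {conn M Y | Y. Y \<in> \<T> \<and> S \<subseteq> Y}"
  by (rule finite_subset[of _ "{..<\<theta>}"]) (use assms in auto)

lemma tangle_rank_le_conn:
  assumes "\<forall>Y\<in>\<T>. conn M Y < \<theta>" "Y \<in> \<T>" "S \<subseteq> Y"
  shows "tangle_rank M \<theta> \<T> S \<le> conn M Y"
proof -
  have "Min {conn M Y | Y. Y \<in> \<T> \<and> S \<subseteq> Y} \<le> conn M Y"
    by (rule Min_le[OF finite_conn_image[OF assms(1)]]) (use assms(2,3) in blast)
  then show ?thesis unfolding tangle_rank_def using assms(2,3) by auto
qed

lemma tangle_rank_le_order:
  assumes "\<forall>Y\<in>\<T>. conn M Y < \<theta>"
  shows "tangle_rank M \<theta> \<T> S \<le> \<theta>"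
proof (cases "\<exists>Y\<in>\<T>. S \<subseteq> Y")
  case True
  then obtain Y where Y: "Y \<in> \<T>" "S \<subseteq> Y" by blast
  then have "conn M Y < \<theta>" using assms by blast
  then show ?thesis using tangle_rank_le_conn[OF assms Y] by linarith
next
  case False
  then show ?thesis unfolding tangle_rank_def by simp
qed

lemma tangle_rank_attained:
  assumes "\<forall>Y\<in>\<T>. conn M Y < \<theta>" "tangle_rank M \<theta> \<T> S < \<theta>"
  obtains Y where "Y \<in> \<T>" "S \<subseteq> Y" "conn M Y = tangle_rank M \<theta> \<T> S"
proof -
  have ex: "\<exists>Y\<in>\<T>. S \<subseteq> Y"
    using assms(2) unfolding tangle_rank_def by (auto split: if_splits)
  then have "Min {conn M Y | Y. Y \<in> \<T> \<and> S \<subseteq> Y} \<in> {conn M Y | Y. Y \<in> \<T> \<and> S \<subseteq> Y}"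
    using finite_conn_image[OF assms(1)] by (intro Min_in) auto
  then show ?thesis using that ex unfolding tangle_rank_def by auto
qed

lemma tangle_rank_mono:
  assumes "\<forall>Y\<in>\<T>. conn M Y < \<theta>" "S \<subseteq> S'"
  shows "tangle_rank M \<theta> \<T> S \<le> tangle_rank M \<theta> \<T> S'"
proof (cases "tangle_rank M \<theta> \<T> S' < \<theta>")
  case True
  then obtain Y where "Y \<in> \<T>" "S' \<subseteq> Y" "conn M Y = tangle_rank M \<theta> \<T> S'"
    using tangle_rank_attained[OF assms(1)] by blast
  then show ?thesis using tangle_rank_le_conn[OF assms(1), of Y S] assms(2) by auto
next
  case False
  then show ?thesis using tangle_rank_le_order[OF assms(1), of S] by auto
qed

lemma tangle_rank_Un_le:
  assumes "matroid M" "n_connected M 3" "tangle M \<theta> \<T>" "1 < \<theta>" "A \<in> \<T>" "B \<in> \<T>"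
    and "k \<le> 2" "k \<le> card (A \<inter> B)" "conn M A + conn M B < \<theta> + k"
  shows "tangle_rank M \<theta> \<T> (A \<union> B) + k \<le> conn M A + conn M B"
proof -
  have A: "A \<subseteq> ground M" and B: "B \<subseteq> ground M" using tangleD(1)[OF assms(3)] assms(5,6) by auto
  have "card (ground M - B) \<le> card (ground M - A \<inter> B)"
    using matroidD(1)[OF assms(1)] by (intro card_mono) auto
  then have "k \<le> card (ground M - A \<inter> B)"
    using tangle_card_Diff_ge[OF assms(1,3,4,6)] assms(7) by linarith
  then have "k \<le> conn M (A \<inter> B)"
    using three_connected_conn_ge[OF assms(2), of "A \<inter> B" k] A assms(7,8) by blast
  then have le: "conn M (A \<union> B) + k \<le> conn M A + conn M B"
    using conn_submodular[OF assms(1) A B] by linarith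
  then have "A \<union> B \<in> \<T>"
    using tangle_Un_mem[OF assms(3,5,6)] assms(9) by linarith
  then show ?thesis
    using tangle_rank_le_conn[OF tangleD(2)[OF assms(3)], of "A \<union> B" "A \<union> B"] le by simp
qed

lemma tangle_disjoint_if_rank_Un_gt_3:
  assumes "matroid M" "n_connected M 3" "tangle M \<theta> \<T>" "W \<in> \<T>" "W' \<in> \<T>"
    and "conn M W \<le> 2" "conn M W' \<le> 2" "3 < tangle_rank M \<theta> \<T> (W \<union> W')"
  shows "W \<inter> W' = {}"
proof (rule ccontr)
  assume "W \<inter> W' \<noteq> {}"
  moreover have "finite (W \<inter> W')"
    using tangleD(1)[OF assms(3,4)] matroidD(1)[OF assms(1)] finite_subset by blast
  ultimately have "1 \<le> card (W \<inter> W')" by (simp add: Suc_le_eq card_gt_0_iff)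
  moreover have "3 < \<theta>"
    using tangle_rank_le_order[OF tangleD(2)[OF assms(3)], of "W \<union> W'"] assms(8) by linarith
  moreover from this have "1 < \<theta>" by linarith
  ultimately show False
    using tangle_rank_Un_le[OF assms(1-3) \<open>1 < \<theta>\<close> assms(4,5), of 1] assms(6-8) by linarith
qed

section \<open>The tangle inherited by a single-element minor\<close>

lemma inherited_tangle_single:
  assumes "e \<in> ground M" "M' = deletion M e \<or> M' = contraction M e"
  shows "inherited_tangle M M' \<theta> \<T> = {Y - {e} | Y. Y \<in> \<T> \<and> conn M' (Y - {e}) < \<theta> - 1}"
proof -
  have "ground M - ground M' = {e}" using assms by auto
  then show ?thesis unfolding inherited_tangle_def Let_def by simp
qed

lemma inherited_tangle_conn_less:
  assumes "e \<in> ground M" "M' = deletion M e \<or> M' = contraction M e"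
  shows "\<forall>Y\<in>inherited_tangle M M' \<theta> \<T>. conn M' Y < \<theta> - 1"
  using inherited_tangle_single[OF assms] by auto

lemma inherited_tangle_rank_le_conn:
  assumes "matroid M" "e \<in> ground M" "M' = deletion M e \<or> M' = contraction M e"
    and "tangle M \<theta> \<T>" "V \<in> \<T>" "conn M V < \<theta> - 1" "S \<subseteq> V - {e}"
  shows "tangle_rank M' (\<theta> - 1) (inherited_tangle M M' \<theta> \<T>) S \<le> conn M V"
proof -
  note bound = inherited_tangle_conn_less[OF assms(2,3), of \<theta> \<T>]
  have "conn M' (V - {e}) \<le> conn M V"
    using conn_minor_Diff_le[OF assms(1-3)] tangleD(1)[OF assms(4,5)] .
  moreover from this have "V - {e} \<in> inherited_tangle M M' \<theta> \<T>"
    using inherited_tangle_single[OF assms(2,3)] assms(5,6) by fastforce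
  ultimately show ?thesis
    using tangle_rank_le_conn[OF bound _ assms(7)] by fastforce
qed

lemma inherited_tangle_rank_ge_3:
  assumes "matroid M" "n_connected M 3" "tangle M \<theta> \<T>"
    and "M' = deletion M e \<or> M' = contraction M e" "n_connected M' 3"
    and "W \<in> \<T>" "e \<in> W" "conn M W \<le> 2" "3 \<le> card W"
    and "S \<subseteq> ground M - {e}" "3 \<le> tangle_rank M \<theta> \<T> S" "4 \<le> tangle_rank M \<theta> \<T> (W \<union> S)"
  shows "3 \<le> tangle_rank M' (\<theta> - 1) (inherited_tangle M M' \<theta> \<T>) S"
proof (rule ccontr)
  let ?E = "ground M" and ?rT' = "tangle_rank M' (\<theta> - 1) (inherited_tangle M M' \<theta> \<T>)"
  have bound: "\<forall>Y\<in>\<T>. conn M Y < \<theta>" using tangleD(2)[OF assms(3)] .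
  have WE: "W \<subseteq> ?E" using tangleD(1)[OF assms(3,6)] .
  have e: "e \<in> ?E" using WE assms(7) by blast
  have \<theta>4: "4 \<le> \<theta>"
    using tangle_rank_le_order[OF bound, of "W \<union> S"] assms(12) by linarith
  then have \<theta>: "1 < \<theta>" by linarith
  assume "\<not> 3 \<le> ?rT' S"
  then have "?rT' S < \<theta> - 1" using \<theta>4 by linarith
  then obtain Z where Z: "Z \<in> inherited_tangle M M' \<theta> \<T>" "S \<subseteq> Z" "conn M' Z = ?rT' S"
    using tangle_rank_attained[OF inherited_tangle_conn_less[OF e assms(4)]] by blast
  with \<open>\<not> 3 \<le> ?rT' S\<close> have Z': "conn M' Z \<le> 2" by linarith
  from Z(1) obtain Y where Y: "Y \<in> \<T>" "Z = Y - {e}"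
    using inherited_tangle_single[OF e assms(4)] by blast
  have ZE: "Z \<subseteq> ?E - {e}" using tangleD(1)[OF assms(3) Y(1)] Y(2) by blast
  have "conn M Z < \<theta>" using conn_minor_bounds(3)[OF assms(1) e assms(4) ZE] Z' \<theta>4 by linarith
  then have ZT: "Z \<in> \<T>" using tangle_subset_mem[OF assms(3) Y(1)] Y(2) by blast
  have conn_Ze: "conn M (insert e Z) \<le> 3"
    using conn_minor_bounds(4)[OF assms(1) e assms(4) ZE] Z' by linarith
  then have "{e} \<union> Z \<in> \<T>"
    using tangle_Un_mem[OF assms(3) tangle_singleton_mem[OF assms(1,3) \<theta> e] ZT] \<theta>4 by simp
  then have ZeT: "insert e Z \<in> \<T>" by simp
  have "3 \<le> conn M Z"
    using tangle_rank_le_conn[OF bound ZT Z(2)] assms(11) by linarith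
  moreover have "Z \<inter> W = {}"
  proof (rule ccontr)
    assume "Z \<inter> W \<noteq> {}"
    then obtain g where g: "g \<in> Z" "g \<in> W" by blast
    with ZE have "g \<noteq> e" by blast
    have "card {g, e} \<le> card (insert e Z \<inter> W)"
    proof (rule card_mono)
      show "finite (insert e Z \<inter> W)" using matroidD(1)[OF assms(1)] WE finite_subset by blast
      show "{g, e} \<subseteq> insert e Z \<inter> W" using g assms(7) by blast
    qed
    moreover have "card {g, e} = 2" using \<open>g \<noteq> e\<close> by simp
    ultimately have "tangle_rank M \<theta> \<T> (insert e Z \<union> W) \<le> 3"
      using tangle_rank_Un_le[OF assms(1-3) \<theta> ZeT assms(6), of 2] conn_Ze assms(8) \<theta>4 by linarith
    moreover have "tangle_rank M \<theta> \<T> (W \<union> S) \<le> tangle_rank M \<theta> \<T> (insert e Z \<union> W)"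
      by (rule tangle_rank_mono[OF bound]) (use Z(2) in blast)
    ultimately show False using assms(12) by linarith
  qed
  then have "conn M Z \<le> conn M' Z"
    using conn_le_minor_conn_if_disjoint[OF assms(1,4,5) WE assms(7-9)
        tangle_card_Diff_ge[OF assms(1,3) \<theta> assms(6)] ZE] by blast
  ultimately show False using Z' by linarith
qed

theorem lemma2p34:
  fixes M M' :: "'a matroid" and \<theta> :: nat and \<T> :: "'a set set"
    and X X' :: "'a set" and e :: 'a
  assumes "matroid M" and "n_connected M 3"
    and "tangle M \<theta> \<T>"
    and "long_line (tangle_matroid M \<theta> \<T>) X"
    and "long_line (tangle_matroid M \<theta> \<T>) X'"
    and "tangle_rank M \<theta> \<T> (X \<union> X') = 4"
    and "e \<in> X"
    and "M' = deletion M e \<or> M' = contraction M e"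
    and "n_connected M' 3"
  shows "closed_set (tangle_matroid M' (\<theta> - 1) (inherited_tangle M M' \<theta> \<T>)) X'"
proof -
  let ?rT = "tangle_rank M \<theta> \<T>" and ?rT' = "tangle_rank M' (\<theta> - 1) (inherited_tangle M M' \<theta> \<T>)"
  have bound: "\<forall>Y\<in>\<T>. conn M Y < \<theta>" using tangleD(2)[OF assms(3)] .
  note X = long_line_tangle_matroidD[OF assms(4)] and X' = long_line_tangle_matroidD[OF assms(5)]
  have \<theta>: "4 \<le> \<theta>" using tangle_rank_le_order[OF bound, of "X \<union> X'"] assms(6) by simp
  obtain W where W: "W \<in> \<T>" "X \<subseteq> W" "conn M W = 2"
    using tangle_rank_attained[OF bound, of X] X(2) \<theta> by auto
  obtain W' where W': "W' \<in> \<T>" "X' \<subseteq> W'" "conn M W' = 2"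
    using tangle_rank_attained[OF bound, of X'] X'(2) \<theta> by auto
  have WE: "W \<subseteq> ground M" using tangleD(1)[OF assms(3) W(1)] .
  have e: "e \<in> ground M" "e \<in> W" using WE W(2) assms(7) by auto
  have "?rT (X \<union> X') \<le> ?rT (W \<union> W')"
    by (rule tangle_rank_mono[OF bound]) (use W(2) W'(2) in blast)
  then have "W \<inter> W' = {}"
    using tangle_disjoint_if_rank_Un_gt_3[OF assms(1-3) W(1) W'(1)] W(3) W'(3) assms(6) by simp
  then have "e \<notin> X'" using e(2) W'(2) by blast
  have "?rT' X' \<le> 2"
    using inherited_tangle_rank_le_conn[OF assms(1) e(1) assms(8,3) W'(1)] W'(2,3) \<open>e \<notin> X'\<close> \<theta>
    by (simp add: subset_Diff_insert)
  moreover have "3 \<le> ?rT' (insert f X')" if f: "f \<in> ground M - {e} - X'" for f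
  proof (rule inherited_tangle_rank_ge_3[OF assms(1-3,8,9) W(1) e(2)])
    have "?rT X' \<le> ?rT (insert f X')" by (rule tangle_rank_mono[OF bound]) blast
    moreover have "?rT (insert f X') \<noteq> 2" using X'(4) f by blast
    ultimately show "3 \<le> ?rT (insert f X')" using X'(2) by linarith
    have "?rT (X \<union> X') \<le> ?rT (W \<union> insert f X')"
      by (rule tangle_rank_mono[OF bound]) (use W(2) in blast)
    then show "4 \<le> ?rT (W \<union> insert f X')" using assms(6) by linarith
    show "3 \<le> card W"
      using card_mono[OF finite_subset[OF WE matroidD(1)[OF assms(1)]] W(2)] X(3) by linarith
  qed (use W(3) f X'(1) \<open>e \<notin> X'\<close> in auto)
  ultimately show ?thesis
    using X'(1) \<open>e \<notin> X'\<close> assms(8) unfolding closed_set_def by fastforce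
qed

end
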